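(* Let $w:\{0,1\}^L\to\mathbb{R}_{\ge 0}$ be a generic fitness landscape inducing the standard staircase triangulation. (i) If the zero-string $0\cdots0$ is a local fitness minimum (all its Hamming neighbours have higher fitness), then it is the global minimum and every edge of the fitness graph is directed toward the endpoint with more $1$'s. (ii) If at most one of the $L$ Hamming neighbours of the zero-string has lower fitness than the zero-string, then the landscape has exactly one peak, and this peak is at Hamming distance at most $1$ from the one-string $1\cdots1$.
   Context: Genotypes are elements of $\{0,1\}^L$, identified with vertices of $[0,1]^L$. The triangulation induced by $w$ is the regular subdivision of $[0,1]^L$ obtained by projecting the upper faces of $\mathrm{conv}\{(g,w_g)\}\subset\mathbb{R}^{L+1}$; $w$ is generic if all $w_g$ are distinct and this subdivision is a triangulation. The fitness graph directs each cube edge toward the genotype of higher fitness; a peak is a genotype all of whose Hamming neighbours have strictly lower fitness. The standard staircase triangulation consists of the $L!$ simplices formed by the genotypes along a walk from $0\cdots0$ to $1\cdots1$ in which each step changes one $0$ into a $1$. *)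

theory Defs
  imports Complex_Main
begin

text \<open>Genotypes in {0,1}^L are encoded as subsets g of {..<L} (the set of loci
carrying a 1); the zero-string is {} and the one-string is {..<L}.
A fitness landscape is w :: nat set => real (only values on the cube matter).\<close>

definition cube :: "nat \<Rightarrow> nat set set" where
  "cube L = Pow {..<L}"

text \<open>Affine function on R^L evaluated at the 0/1 vertex g: c + sum_{i in g} a_i.\<close>
definition aff_val :: "(nat \<Rightarrow> real) \<Rightarrow> real \<Rightarrow> nat set \<Rightarrow> real" where
  "aff_val a c g = c + (\<Sum>i\<in>g. a i)"

text \<open>S is the vertex set of an upper face of conv{(g,w g)}: some affine function
lies weakly above all lifted points, touching exactly those of S.\<close>
definition upper_cell :: "nat \<Rightarrow> (nat set \<Rightarrow> real) \<Rightarrow> nat set set \<Rightarrow> bool" where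
  "upper_cell L w S \<longleftrightarrow> S \<subseteq> cube L \<and>
     (\<exists>a c. \<forall>g\<in>cube L. (g \<in> S \<longrightarrow> aff_val a c g = w g) \<and>
                          (g \<notin> S \<longrightarrow> aff_val a c g > w g))"

definition max_cell :: "nat \<Rightarrow> (nat set \<Rightarrow> real) \<Rightarrow> nat set set \<Rightarrow> bool" where
  "max_cell L w S \<longleftrightarrow> upper_cell L w S \<and> \<not> (\<exists>T. upper_cell L w T \<and> S \<subset> T)"

definition aff_indep :: "nat \<Rightarrow> nat set set \<Rightarrow> bool" where
  "aff_indep L S \<longleftrightarrow> (\<forall>lam :: nat set \<Rightarrow> real.
      (\<Sum>g\<in>S. lam g) = 0 \<and> (\<forall>i<L. (\<Sum>g\<in>S. if i \<in> g then lam g else 0) = 0)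
      \<longrightarrow> (\<forall>g\<in>S. lam g = 0))"

definition generic :: "nat \<Rightarrow> (nat set \<Rightarrow> real) \<Rightarrow> bool" where
  "generic L w \<longleftrightarrow> inj_on w (cube L) \<and> (\<forall>S. upper_cell L w S \<longrightarrow> aff_indep L S)"

definition staircase_simplex :: "nat \<Rightarrow> nat set set \<Rightarrow> bool" where
  "staircase_simplex L S \<longleftrightarrow> (\<exists>f :: nat \<Rightarrow> nat set. f 0 = {} \<and> f L = {..<L} \<and>
      (\<forall>k<L. \<exists>i. i \<notin> f k \<and> f (Suc k) = insert i (f k)) \<and> S = f ` {..L})"

definition induces_staircase :: "nat \<Rightarrow> (nat set \<Rightarrow> real) \<Rightarrow> bool" where
  "induces_staircase L w \<longleftrightarrow> {S. max_cell L w S} = {S. staircase_simplex L S}"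

definition hamming_nb :: "nat set \<Rightarrow> nat set \<Rightarrow> bool" where
  "hamming_nb g h \<longleftrightarrow> card ((g - h) \<union> (h - g)) = 1"

definition is_peak :: "nat \<Rightarrow> (nat set \<Rightarrow> real) \<Rightarrow> nat set \<Rightarrow> bool" where
  "is_peak L w g \<longleftrightarrow> g \<in> cube L \<and> (\<forall>h\<in>cube L. hamming_nb g h \<longrightarrow> w h < w g)"

end

theory Submission
  imports Defs
begin

(*
  The staircase simplex through g, g+i and g+i+j is an upper cell, so some affine function
  agrees with w on its vertices and lies strictly above w elsewhere. Staircase simplices are
  chains, so g+j is not a vertex; since affine functions are modular on squares, w is strictly
  supermodular: w(g+i) + w(g+j) < w(g) + w(g+i+j). Summing along a chain, the gain
  w(g+i) - w(g) of switching locus i on is at least its gain w{i} - w{} at the zero-string.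

  If every singleton gain is positive, all edges therefore point upward, which gives (i).
  A peak g can miss locus i only if w{i} < w{}; so if at most one locus is of this kind,
  every peak misses at most one locus, and two distinct peaks would differ exactly in that
  locus and hence be adjacent, which is impossible. A peak exists at the maximum of w.
*)

lemma hamming_nb_iff:
  "hamming_nb g h \<longleftrightarrow> (\<exists>x. (x \<in> g \<longleftrightarrow> x \<notin> h) \<and> (\<forall>y. y \<noteq> x \<longrightarrow> (y \<in> g \<longleftrightarrow> y \<in> h)))"
  unfolding hamming_nb_def One_nat_def card_1_singleton_iff set_eq_iff
  by (intro ex_cong1) blast

lemma hamming_nb_sym: "hamming_nb g h \<Longrightarrow> hamming_nb h g"
  unfolding hamming_nb_iff by metis

lemma hamming_nb_insert: "x \<notin> g \<Longrightarrow> hamming_nb g (insert x g)"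
  unfolding hamming_nb_iff by auto

lemma hamming_nb_empty_iff: "hamming_nb {} h \<longleftrightarrow> (\<exists>x. h = {x})"
  unfolding hamming_nb_iff by auto

lemma hamming_nb_card_less:
  assumes "hamming_nb g h" "finite h" "card g < card h"
  obtains x where "x \<notin> g" "h = insert x g"
proof -
  obtain x where x: "x \<in> g \<longleftrightarrow> x \<notin> h" and others: "\<And>y. y \<noteq> x \<Longrightarrow> y \<in> g \<longleftrightarrow> y \<in> h"
    using assms(1) unfolding hamming_nb_iff by blast
  have "x \<notin> g"
  proof
    assume "x \<in> g"
    have "g = insert x h" by (intro set_eqI) (metis x others \<open>x \<in> g\<close> insert_iff)
    then have "card g = Suc (card h)" using \<open>x \<in> g\<close> x assms(2) by simp
    then show False using assms(3) by simp
  qed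
  moreover have "h = insert x g" by (intro set_eqI) (metis x others \<open>x \<notin> g\<close> insert_iff)
  ultimately show thesis by (rule that)
qed

lemma staircase_simplex_chain:
  assumes "staircase_simplex L S" "A \<in> S" "B \<in> S"
  shows "A \<subseteq> B \<or> B \<subseteq> A"
proof -
  obtain f where steps: "\<forall>k<L. \<exists>i. i \<notin> f k \<and> f (Suc k) = insert i (f k)"
    and S: "S = f ` {..L}"
    using assms(1) unfolding staircase_simplex_def by blast
  have mono: "f k \<subseteq> f l" if "k \<le> l" "l \<le> L" for k l
    using that
  proof (induction l rule: dec_induct)
    case (step l)
    then have "f l \<subseteq> f (Suc l)" using steps by (metis Suc_le_lessD subset_insertI)
    with step show ?case by simp
  qed simp
  obtain k l where "k \<le> L" "l \<le> L" "A = f k" "B = f l" using assms(2,3) S by auto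
  then show ?thesis using mono[of k l] mono[of l k] by (cases "k \<le> l") auto
qed

lemma staircase_simplex_prefixes:
  assumes "distinct xs" "set xs = {..<L}"
  shows "staircase_simplex L ((\<lambda>k. set (take k xs)) ` {..L})"
proof -
  have len: "length xs = L" using distinct_card[OF assms(1)] assms(2) by simp
  have "\<exists>i. i \<notin> set (take k xs) \<and> set (take (Suc k) xs) = insert i (set (take k xs))"
    if "k < L" for k
  proof -
    have "take (Suc k) xs = take k xs @ [xs ! k]"
      using that len by (simp add: take_Suc_conv_app_nth)
    moreover have "distinct (take (Suc k) xs)" using assms(1) by simp
    ultimately show ?thesis by auto
  qed
  then show ?thesis
    unfolding staircase_simplex_def using assms(2) len
    by (intro exI[of _ "\<lambda>k. set (take k xs)"]) simp
qed

lemma aff_val_modular: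
  assumes "finite g" "i \<notin> g" "j \<notin> g" "i \<noteq> j"
  shows "aff_val a c g + aff_val a c (insert i (insert j g))
       = aff_val a c (insert i g) + aff_val a c (insert j g)"
  using assms unfolding aff_val_def by simp

lemma staircase_supermodular:
  assumes stair: "induces_staircase L w"
    and g: "g \<subseteq> {..<L}" and "i < L" "j < L" "i \<notin> g" "j \<notin> g" "i \<noteq> j"
  shows "w (insert i g) + w (insert j g) < w g + w (insert i (insert j g))"
proof -
  have fin: "finite g" using g finite_subset by blast
  define xs where
    "xs = sorted_list_of_set g @ [i, j] @ sorted_list_of_set ({..<L} - insert i (insert j g))"
  define S where "S = (\<lambda>k. set (take k xs)) ` {..L}"
  have "distinct xs" "set xs = {..<L}"
    unfolding xs_def using fin assms by auto
  then have simplex: "staircase_simplex L S"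
    unfolding S_def by (rule staircase_simplex_prefixes)
  then have "upper_cell L w S"
    using stair unfolding induces_staircase_def max_cell_def by blast
  then obtain a c where
      on_S: "\<And>h. h \<in> cube L \<Longrightarrow> h \<in> S \<Longrightarrow> aff_val a c h = w h" and
      off_S: "\<And>h. h \<in> cube L \<Longrightarrow> h \<notin> S \<Longrightarrow> w h < aff_val a c h"
    unfolding upper_cell_def by blast
  have "card (insert i (insert j g)) \<le> card {..<L}"
    using assms by (intro card_mono) auto
  then have "card g + 2 \<le> L" using fin assms by simp
  then have "card g \<in> {..L}" "card g + 1 \<in> {..L}" "card g + 2 \<in> {..L}" by auto
  moreover have "set (take (card g) xs) = g"
    "set (take (card g + 1) xs) = insert i g"
    "set (take (card g + 2) xs) = insert i (insert j g)"
    unfolding xs_def using fin by (auto simp: take_append)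
  ultimately have in_S: "g \<in> S" "insert i g \<in> S" "insert i (insert j g) \<in> S"
    unfolding S_def by (metis image_eqI)+
  have "insert j g \<notin> S"
    using staircase_simplex_chain[OF simplex in_S(2)] assms by blast
  moreover have "g \<in> cube L" "insert i g \<in> cube L" "insert j g \<in> cube L"
    "insert i (insert j g) \<in> cube L"
    unfolding cube_def using assms by auto
  ultimately show ?thesis
    using on_S in_S off_S aff_val_modular[OF fin assms(5-7), of a c] by fastforce
qed

lemma staircase_marginal_ge:
  assumes stair: "induces_staircase L w"
    and "g \<subseteq> {..<L}" "i < L" "i \<notin> g"
  shows "w {i} - w {} \<le> w (insert i g) - w g"
proof -
  have "finite g" using assms(2) finite_subset by blast
  then show ?thesis using assms(2-4)
  proof (induction g rule: finite_induct)
    case (insert j F)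
    then have "w {i} - w {} \<le> w (insert i F) - w F" by simp
    moreover have "w (insert i F) + w (insert j F) < w F + w (insert i (insert j F))"
      using insert by (intro staircase_supermodular[OF stair]) auto
    ultimately show ?case by linarith
  qed simp
qed

lemma staircase_increasing_if_zero_local_min:
  assumes stair: "induces_staircase L w" and min: "\<And>i. i < L \<Longrightarrow> w {} < w {i}"
    and "g \<subseteq> {..<L}" "i < L" "i \<notin> g"
  shows "w g < w (insert i g)"
  using staircase_marginal_ge[OF stair assms(3-5)] min[OF assms(4)] by linarith

lemma staircase_edges_point_up:
  assumes stair: "induces_staircase L w" and min: "\<And>i. i < L \<Longrightarrow> w {} < w {i}"
    and "g \<in> cube L" "h \<in> cube L" "hamming_nb g h" "card g < card h"
  shows "w g < w h"
proof -
  have "finite h" using assms(4) unfolding cube_def by (auto intro: finite_subset)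
  then obtain x where "x \<notin> g" "h = insert x g"
    using hamming_nb_card_less assms(5,6) by metis
  then show ?thesis
    using assms(3,4) unfolding cube_def
    by (auto intro: staircase_increasing_if_zero_local_min[OF stair min])
qed

lemma staircase_zero_global_min:
  assumes stair: "induces_staircase L w" and min: "\<And>i. i < L \<Longrightarrow> w {} < w {i}"
    and "g \<in> cube L" "g \<noteq> {}"
  shows "w {} < w g"
proof -
  have g: "g \<subseteq> {..<L}" using assms(3) unfolding cube_def by simp
  then have "finite g" using finite_subset by blast
  from this \<open>g \<noteq> {}\<close> g show ?thesis
  proof (induction g rule: finite_ne_induct)
    case (singleton x)
    then show ?case using min by simp
  next
    case (insert x F)
    then have "w {} < w F" "w F < w (insert x F)"
      by (auto intro: staircase_increasing_if_zero_local_min[OF stair min])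
    then show ?case by simp
  qed
qed

lemma card_lower_neighbours_of_empty:
  "card {h \<in> cube L. hamming_nb {} h \<and> w h < w {}} = card {i. i < L \<and> w {i} < w {}}"
proof -
  have "{h \<in> cube L. hamming_nb {} h \<and> w h < w {}} = (\<lambda>i. {i}) ` {i. i < L \<and> w {i} < w {}}"
    unfolding hamming_nb_empty_iff cube_def by auto
  then show ?thesis by (simp add: card_image)
qed

lemma peak_exists:
  assumes "inj_on w (cube L)"
  shows "\<exists>g. is_peak L w g"
proof -
  have fin: "finite (w ` cube L)" by (simp add: cube_def)
  have "w ` cube L \<noteq> {}" by (auto simp: cube_def)
  then obtain g where g: "g \<in> cube L" "w g = Max (w ` cube L)"
    using Max_in[OF fin] by (metis imageE)
  have "w h < w g" if "h \<in> cube L" "hamming_nb g h" for h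
  proof -
    have "h \<noteq> g" using that(2) unfolding hamming_nb_def by auto
    then have "w h \<noteq> w g" using inj_onD[OF assms] that(1) g(1) by blast
    moreover have "w h \<le> w g" using g(2) Max_ge[OF fin] that(1) by simp
    ultimately show ?thesis by simp
  qed
  then show ?thesis using g(1) unfolding is_peak_def by blast
qed

lemma peaks_not_hamming_nb:
  assumes "is_peak L w g" "is_peak L w h"
  shows "\<not> hamming_nb g h"
  using assms hamming_nb_sym unfolding is_peak_def by force

lemma staircase_peak_missing_loci:
  assumes stair: "induces_staircase L w" and inj: "inj_on w (cube L)"
    and peak: "is_peak L w g"
  shows "{..<L} - g \<subseteq> {i. i < L \<and> w {i} < w {}}"
proof
  fix j assume j: "j \<in> {..<L} - g"
  have g: "g \<subseteq> {..<L}" using peak unfolding is_peak_def cube_def by simp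
  have "\<not> w {} < w {j}"
  proof
    assume "w {} < w {j}"
    then have "w g < w (insert j g)"
      using staircase_marginal_ge[OF stair g, of j] j by simp
    moreover have "insert j g \<in> cube L" using g j unfolding cube_def by simp
    ultimately show False
      using peak hamming_nb_insert[of j g] j unfolding is_peak_def by force
  qed
  moreover have "w {j} \<noteq> w {}"
    using inj j unfolding cube_def by (auto dest: inj_onD)
  ultimately show "j \<in> {i. i < L \<and> w {i} < w {}}" using j by auto
qed

lemma staircase_peak_unique:
  assumes stair: "induces_staircase L w" and inj: "inj_on w (cube L)"
    and few: "card {i. i < L \<and> w {i} < w {}} \<le> 1"
    and "is_peak L w g" "is_peak L w h"
  shows "g = h"
proof (rule ccontr)
  assume "g \<noteq> h"
  let ?B = "{i. i < L \<and> w {i} < w {}}"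
  have "g \<subseteq> {..<L}" "h \<subseteq> {..<L}" using assms(4,5) unfolding is_peak_def cube_def by auto
  then have sub: "sym_diff g h \<subseteq> ?B"
    using staircase_peak_missing_loci[OF stair inj] assms(4,5) by blast
  have fin: "finite ?B" by simp
  have "card (sym_diff g h) \<le> 1" using card_mono[OF fin sub] few by linarith
  moreover have "card (sym_diff g h) \<noteq> 0"
    using finite_subset[OF sub fin] \<open>g \<noteq> h\<close> by auto
  ultimately have "hamming_nb g h" unfolding hamming_nb_def by simp
  then show False using peaks_not_hamming_nb assms(4,5) by blast
qed

theorem mainTheorem10:
  fixes L :: nat and w :: "nat set \<Rightarrow> real"
  assumes nonneg: "\<forall>g\<in>cube L. w g \<ge> 0"
    and gen: "generic L w"
    and stair: "induces_staircase L w"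
  shows "((\<forall>h\<in>cube L. hamming_nb {} h \<longrightarrow> w {} < w h) \<longrightarrow>
            (\<forall>g\<in>cube L. g \<noteq> {} \<longrightarrow> w {} < w g) \<and>
            (\<forall>g\<in>cube L. \<forall>h\<in>cube L. hamming_nb g h \<and> card g < card h \<longrightarrow> w g < w h))
       \<and> (card {h\<in>cube L. hamming_nb {} h \<and> w h < w {}} \<le> 1 \<longrightarrow>
            (\<exists>!g. is_peak L w g) \<and> (\<forall>g. is_peak L w g \<longrightarrow> card ({..<L} - g) \<le> 1))"
proof (intro conjI impI)
  assume "\<forall>h\<in>cube L. hamming_nb {} h \<longrightarrow> w {} < w h"
  then have min: "\<And>i. i < L \<Longrightarrow> w {} < w {i}"
    unfolding hamming_nb_empty_iff cube_def by auto
  show "\<forall>g\<in>cube L. g \<noteq> {} \<longrightarrow> w {} < w g"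
    using staircase_zero_global_min[OF stair min] by blast
  show "\<forall>g\<in>cube L. \<forall>h\<in>cube L. hamming_nb g h \<and> card g < card h \<longrightarrow> w g < w h"
    using staircase_edges_point_up[OF stair min] by blast
next
  assume "card {h\<in>cube L. hamming_nb {} h \<and> w h < w {}} \<le> 1"
  then have few: "card {i. i < L \<and> w {i} < w {}} \<le> 1"
    by (simp add: card_lower_neighbours_of_empty)
  have inj: "inj_on w (cube L)" using gen unfolding generic_def by blast
  show "\<exists>!g. is_peak L w g"
    using peak_exists[OF inj] staircase_peak_unique[OF stair inj few] by blast
  show "\<forall>g. is_peak L w g \<longrightarrow> card ({..<L} - g) \<le> 1"
  proof (intro allI impI)
    fix g assume "is_peak L w g"
    then have "card ({..<L} - g) \<le> card {i. i < L \<and> w {i} < w {}}"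
      by (intro card_mono staircase_peak_missing_loci[OF stair inj]) simp_all
    with few show "card ({..<L} - g) \<le> 1" by linarith
  qed
qed

end
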